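(* Let $\theta\in\mathbb{K}\setminus\{0\}$ and let $(A,P)$ be a complete filtered Rota--Baxter algebra of weight $\theta$ over a field $\mathbb{K}$ of characteristic zero; put $\tilde P:=\theta\,\mathrm{id}_A-P$. Let $\chi_\theta:A_1\to A_1$ be the map defined by $$\chi_\theta(a)=a-\frac1\theta\,\mathrm{BCH}\Big(P\big(\chi_\theta(a)\big),\tilde P\big(\chi_\theta(a)\big)\Big),\qquad a\in A_1.$$ Then for all $a\in A_1$: (1) $\chi_\theta(a)=a+\frac1\theta\,\mathrm{BCH}\big(-P(\chi_\theta(a)),\theta a\big)$; (2) $\exp(\theta a)=\exp\big(P(\chi_\theta(a))\big)\exp\big(\tilde P(\chi_\theta(a))\big)$; (3) with $b\in A$ defined by $1+\theta b:=\exp(\theta a)$, the elements $x:=\exp\big(P(\chi_\theta(a))\big)^{-1}$ and $x':=\exp\big(\tilde P(\chi_\theta(a))\big)^{-1}$ are the unique solutions of the equations $x=1-P(x\,b)$ and $x'=1-\tilde P(b\,x')$ respectively.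
   Context: A Rota--Baxter algebra of weight $\theta$ is an associative $\mathbb{K}$-algebra $A$ with a linear map $P:A\to A$ satisfying $P(x)P(y)+\theta P(xy)=P(xP(y))+P(P(x)y)$ for all $x,y\in A$. A Rota--Baxter ideal is an ideal $I$ with $P(I)\subseteq I$. A complete filtered Rota--Baxter algebra is a Rota--Baxter algebra $(A,P)$ with a decreasing filtration $A=A_0\supseteq A_1\supseteq\cdots$ by Rota--Baxter ideals such that $A_mA_n\subseteq A_{m+n}$ and $A\cong\varprojlim A/A_n$. $\exp$ and $\log$ are the usual series, mutually inverse bijections between $A_1$ and $1+A_1$. $\mathrm{BCH}(x,y)$ is the Baker--Campbell--Hausdorff series, $\exp(x)\exp(y)=\exp(x+y+\mathrm{BCH}(x,y))$. The map $\chi_\theta$ is the unique map $A_1\to A_1$ satisfying the displayed fixed-point equation (obtained as the limit, in the filtration topology, of the iteration starting from $a$). *)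

theory Defs
  imports Main
begin

text \<open>An associative unital K-algebra is modelled as a type 'a of class ring_1
  together with a scalar multiplication smul by a field 'k of characteristic zero.\<close>

definition is_algebra :: "('k::field_char_0 \<Rightarrow> 'a::ring_1 \<Rightarrow> 'a) \<Rightarrow> bool" where
  "is_algebra smul \<longleftrightarrow>
     (\<forall>c d x. smul (c + d) x = smul c x + smul d x) \<and>
     (\<forall>c x y. smul c (x + y) = smul c x + smul c y) \<and>
     (\<forall>c d x. smul (c * d) x = smul c (smul d x)) \<and>
     (\<forall>x. smul 1 x = x) \<and>
     (\<forall>c x y. smul c (x * y) = smul c x * y) \<and>
     (\<forall>c x y. smul c (x * y) = x * smul c y)"

definition is_rota_baxter :: "('k::field_char_0 \<Rightarrow> 'a::ring_1 \<Rightarrow> 'a) \<Rightarrow> ('a \<Rightarrow> 'a) \<Rightarrow> 'k \<Rightarrow> bool" where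
  "is_rota_baxter smul P \<theta> \<longleftrightarrow>
     (\<forall>x y. P (x + y) = P x + P y) \<and>
     (\<forall>c x. P (smul c x) = smul c (P x)) \<and>
     (\<forall>x y. P x * P y + smul \<theta> (P (x * y)) = P (x * P y) + P (P x * y))"

definition is_rb_ideal :: "('k::field_char_0 \<Rightarrow> 'a::ring_1 \<Rightarrow> 'a) \<Rightarrow> ('a \<Rightarrow> 'a) \<Rightarrow> 'a set \<Rightarrow> bool" where
  "is_rb_ideal smul P I \<longleftrightarrow>
     0 \<in> I \<and> (\<forall>x\<in>I. \<forall>y\<in>I. x + y \<in> I) \<and> (\<forall>x\<in>I. - x \<in> I) \<and>
     (\<forall>c. \<forall>x\<in>I. smul c x \<in> I) \<and>
     (\<forall>x\<in>I. \<forall>y. x * y \<in> I \<and> y * x \<in> I) \<and>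
     (\<forall>x\<in>I. P x \<in> I)"

text \<open>Completeness
  (the canonical map A \<rightarrow> lim A/A_n is bijective) is unfolded as:
  injectivity (the filtration is separated) and surjectivity (every compatible
  system of residues, represented by a sequence x with x(n+1) - x n \<in> A_n,
  has a preimage).\<close>
definition complete_filtered_rb ::
  "('k::field_char_0 \<Rightarrow> 'a::ring_1 \<Rightarrow> 'a) \<Rightarrow> ('a \<Rightarrow> 'a) \<Rightarrow> 'k \<Rightarrow> (nat \<Rightarrow> 'a set) \<Rightarrow> bool" where
  "complete_filtered_rb smul P \<theta> F \<longleftrightarrow>
     is_algebra smul \<and> is_rota_baxter smul P \<theta> \<and>
     F 0 = UNIV \<and> (\<forall>n. F (Suc n) \<subseteq> F n) \<and>
     (\<forall>n. is_rb_ideal smul P (F n)) \<and>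
     (\<forall>m n. \<forall>x\<in>F m. \<forall>y\<in>F n. x * y \<in> F (m + n)) \<and>
     (\<Inter>n. F n) = {0} \<and>
     (\<forall>x::nat \<Rightarrow> 'a. (\<forall>n. x (Suc n) - x n \<in> F n) \<longrightarrow> (\<exists>y. \<forall>n. y - x n \<in> F n))"

definition flim :: "(nat \<Rightarrow> 'a set) \<Rightarrow> (nat \<Rightarrow> 'a::ring_1) \<Rightarrow> 'a \<Rightarrow> bool" where
  "flim F s y \<longleftrightarrow> (\<forall>n. \<exists>N. \<forall>m\<ge>N. s m - y \<in> F n)"

definition flimit :: "(nat \<Rightarrow> 'a set) \<Rightarrow> (nat \<Rightarrow> 'a::ring_1) \<Rightarrow> 'a" where
  "flimit F s = (THE y. flim F s y)"

definition fsuminf :: "(nat \<Rightarrow> 'a set) \<Rightarrow> (nat \<Rightarrow> 'a::ring_1) \<Rightarrow> 'a" where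
  "fsuminf F f = flimit F (\<lambda>N. \<Sum>i<N. f i)"

definition fexp :: "('k::field_char_0 \<Rightarrow> 'a::ring_1 \<Rightarrow> 'a) \<Rightarrow> (nat \<Rightarrow> 'a set) \<Rightarrow> 'a \<Rightarrow> 'a" where
  "fexp smul F x = fsuminf F (\<lambda>n. smul (inverse (fact n)) (x ^ n))"

definition flog :: "('k::field_char_0 \<Rightarrow> 'a::ring_1 \<Rightarrow> 'a) \<Rightarrow> (nat \<Rightarrow> 'a set) \<Rightarrow> 'a \<Rightarrow> 'a" where
  "flog smul F u = fsuminf F (\<lambda>n. if n = 0 then 0
      else smul ((-1) ^ (n + 1) / of_nat n) ((u - 1) ^ n))"

definition BCH :: "('k::field_char_0 \<Rightarrow> 'a::ring_1 \<Rightarrow> 'a) \<Rightarrow> (nat \<Rightarrow> 'a set) \<Rightarrow> 'a \<Rightarrow> 'a \<Rightarrow> 'a" where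
  "BCH smul F x y = flog smul F (fexp smul F x * fexp smul F y) - x - y"

definition rinv :: "'a::ring_1 \<Rightarrow> 'a" where
  "rinv e = (THE x. x * e = 1 \<and> e * x = 1)"

definition Ptilde :: "('k::field_char_0 \<Rightarrow> 'a::ring_1 \<Rightarrow> 'a) \<Rightarrow> ('a \<Rightarrow> 'a) \<Rightarrow> 'k \<Rightarrow> 'a \<Rightarrow> 'a" where
  "Ptilde smul P \<theta> x = smul \<theta> x - P x"

fun chi_iter :: "('k::field_char_0 \<Rightarrow> 'a::ring_1 \<Rightarrow> 'a) \<Rightarrow> ('a \<Rightarrow> 'a) \<Rightarrow> 'k \<Rightarrow> (nat \<Rightarrow> 'a set) \<Rightarrow> 'a \<Rightarrow> nat \<Rightarrow> 'a" where
  "chi_iter smul P \<theta> F a 0 = a"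
| "chi_iter smul P \<theta> F a (Suc k) =
     a - smul (inverse \<theta>) (BCH smul F (P (chi_iter smul P \<theta> F a k))
                                       (Ptilde smul P \<theta> (chi_iter smul P \<theta> F a k)))"

definition chi :: "('k::field_char_0 \<Rightarrow> 'a::ring_1 \<Rightarrow> 'a) \<Rightarrow> ('a \<Rightarrow> 'a) \<Rightarrow> 'k \<Rightarrow> (nat \<Rightarrow> 'a set) \<Rightarrow> 'a \<Rightarrow> 'a" where
  "chi smul P \<theta> F a = flimit F (chi_iter smul P \<theta> F a)"

end

theory Submission
  imports Defs "HOL-Computational_Algebra.Formal_Power_Series"
begin

unbundle fps_syntax

text \<open>
  Evaluating a formal power series at an element of \<open>A\<^sub>1\<close> is a ring homomorphism
  \<open>\<bbbK>[[X]] \<rightarrow> A\<close> compatible with composition, so \<open>log\<close> and \<open>exp\<close> are mutually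
  inverse and \<open>exp x exp (-x) = 1\<close>.  The map defining \<open>\<chi>\<^sub>\<theta>\<close> raises the filtration
  degree of differences, hence its iterates converge to a fixed point \<open>c\<close>; applying
  \<open>exp\<close> to the fixed-point equation gives (2), \<open>exp (\<theta>a) = exp (P c) exp (P\<^sup>~ c)\<close>,
  and (1) follows by multiplying with \<open>exp (- P c)\<close>.  For (3), the weight-\<open>\<theta>\<close> product
  \<open>x \<star> y = x P y + P x y - \<theta>xy\<close> satisfies \<open>P (x \<star> y) = P x P y\<close> and
  \<open>P\<^sup>~ (x \<star> y) = - P\<^sup>~ x P\<^sup>~ y\<close>, so \<open>P\<^sup>~ (P c)\<^sup>n + P (- P\<^sup>~ c)\<^sup>n = 0\<close> for
  \<open>n \<ge> 1\<close>.  Summing the exponential series gives \<open>P\<^sup>~ (exp (P c)) + P (exp (- P\<^sup>~ c)) = \<theta>\<close>,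
  which turns \<open>exp (- P c)\<close> and \<open>exp (- P\<^sup>~ c)\<close> into solutions of the two equations;
  they are unique because the equations are contractions for the filtration.
\<close>

lemma rinv_eqI:
  fixes e x :: "'a::ring_1"
  assumes "x * e = 1" and "e * x = 1"
  shows "rinv e = x"
  unfolding rinv_def
proof (rule the_equality)
  fix y assume y: "y * e = 1 \<and> e * y = 1"
  have "y = y * (e * x)" using assms by simp
  also have "\<dots> = x" using y by (simp add: mult.assoc[symmetric])
  finally show "y = x" .
qed (use assms in auto)

section \<open>Complete filtered algebras\<close>

locale complete_filtered_algebra =
  fixes smul :: "'k::field_char_0 \<Rightarrow> 'a::ring_1 \<Rightarrow> 'a" and F :: "nat \<Rightarrow> 'a set"
  assumes algebra: "is_algebra smul"
    and filtration_0: "F 0 = UNIV"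
    and filtration_Suc: "F (Suc n) \<subseteq> F n"
    and filtration_add: "x \<in> F n \<Longrightarrow> y \<in> F n \<Longrightarrow> x + y \<in> F n"
    and filtration_mult: "x \<in> F m \<Longrightarrow> y \<in> F n \<Longrightarrow> x * y \<in> F (m + n)"
    and filtration_separated: "(\<Inter>n. F n) = {0}"
    and filtration_complete: "(\<And>n. s (Suc n) - s n \<in> F n) \<Longrightarrow> \<exists>y. \<forall>n. y - s n \<in> F n"
begin

lemma smul_add_left: "smul (c + d) x = smul c x + smul d x"
  using algebra by (simp add: is_algebra_def)

lemma smul_add_right: "smul c (x + y) = smul c x + smul c y"
  using algebra by (simp add: is_algebra_def)

lemma smul_smul: "smul c (smul d x) = smul (c * d) x"
  using algebra by (simp add: is_algebra_def)

lemma smul_one [simp]: "smul 1 x = x"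
  using algebra by (simp add: is_algebra_def)

lemma smul_mult_left: "smul c x * y = smul c (x * y)"
  using algebra by (simp add: is_algebra_def)

lemma smul_mult_right: "x * smul c y = smul c (x * y)"
  using algebra by (metis is_algebra_def)

lemma smul_zero_left [simp]: "smul 0 x = 0"
  using smul_add_left[of 0 0 x] by simp

lemma smul_zero_right [simp]: "smul c 0 = 0"
  using smul_add_right[of c 0 0] by simp

lemma smul_minus_right: "smul c (- x) = - smul c x"
  using smul_add_right[of c x "- x"] by (simp add: eq_neg_iff_add_eq_0 add.commute)

lemma smul_minus_left: "smul (- c) x = - smul c x"
  using smul_add_left[of c "- c" x] by (simp add: eq_neg_iff_add_eq_0 add.commute)

lemma smul_diff_right: "smul c (x - y) = smul c x - smul c y"
  using smul_add_right[of c x "- y"] by (simp add: smul_minus_right)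

lemma smul_sum_left: "smul (sum f A) x = (\<Sum>i\<in>A. smul (f i) x)"
  by (induction A rule: infinite_finite_induct) (auto simp: smul_add_left)

lemma smul_inverse_smul: "c \<noteq> 0 \<Longrightarrow> smul (inverse c) (smul c x) = x"
  by (simp add: smul_smul)

lemma smul_left_cancel: "c \<noteq> 0 \<Longrightarrow> smul c x = smul c y \<longleftrightarrow> x = y"
  by (metis smul_inverse_smul)

lemma smul_smul_inverse: "c \<noteq> 0 \<Longrightarrow> smul c (smul (inverse c) x) = x"
  by (simp add: smul_smul)

lemma filtration_zero [simp]: "0 \<in> F n"
proof -
  have "0 \<in> (\<Inter>n. F n)" by (simp add: filtration_separated)
  then show ?thesis by blast
qed

lemma filtration_mult_left: "x \<in> F n \<Longrightarrow> y * x \<in> F n"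
  using filtration_mult[of y 0 x n] filtration_0 by simp

lemma filtration_mult_right: "x \<in> F n \<Longrightarrow> x * y \<in> F n"
  using filtration_mult[of x n y 0] filtration_0 by simp

lemma filtration_uminus: "x \<in> F n \<Longrightarrow> - x \<in> F n"
  using filtration_mult_left[of x n "- 1"] by simp

lemma filtration_diff: "x \<in> F n \<Longrightarrow> y \<in> F n \<Longrightarrow> x - y \<in> F n"
  using filtration_add[of x n "- y"] filtration_uminus by simp

lemma filtration_diff_commute: "x - y \<in> F n \<Longrightarrow> y - x \<in> F n"
  using filtration_uminus[of "x - y" n] by simp

lemma filtration_smul: "x \<in> F n \<Longrightarrow> smul c x \<in> F n"
  using filtration_mult_left[of x n "smul c 1"] by (simp add: smul_mult_left)

lemma filtration_sum: "(\<And>i. i \<in> A \<Longrightarrow> f i \<in> F n) \<Longrightarrow> sum f A \<in> F n"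
  by (induction A rule: infinite_finite_induct) (auto simp: filtration_add)

lemma filtration_antimono: "m \<le> n \<Longrightarrow> F n \<subseteq> F m"
  by (induction n rule: dec_induct) (use filtration_Suc in auto)

lemma filtration_antimonoD: "x \<in> F n \<Longrightarrow> m \<le> n \<Longrightarrow> x \<in> F m"
  using filtration_antimono by blast

lemma filtration_power: "x \<in> F 1 \<Longrightarrow> x ^ n \<in> F n"
  by (induction n) (use filtration_mult[of x 1] in \<open>simp_all add: filtration_0\<close>)

lemma eq_if_diff_in_filtration:
  assumes "\<And>n. x - y \<in> F n"
  shows "x = y"
proof -
  have "x - y \<in> (\<Inter>n. F n)" using assms by blast
  then show ?thesis using filtration_separated by simp
qed

lemma power_diff_in_filtration:
  assumes x: "x \<in> F 1" and y: "y \<in> F 1" and d: "x - y \<in> F k"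
  shows "x ^ Suc n - y ^ Suc n \<in> F (k + n)"
proof (induction n)
  case 0
  then show ?case using d by simp
next
  case (Suc n)
  have "x ^ Suc (Suc n) - y ^ Suc (Suc n) = x * (x ^ Suc n - y ^ Suc n) + (x - y) * y ^ Suc n"
    by (simp add: algebra_simps)
  moreover have "x * (x ^ Suc n - y ^ Suc n) \<in> F (1 + (k + n))"
    using filtration_mult x Suc by blast
  moreover have "(x - y) * y ^ Suc n \<in> F (k + Suc n)"
    using filtration_mult d filtration_power[OF y] by blast
  ultimately show ?case by (simp add: filtration_add add.commute)
qed

section \<open>Limits and series in the filtration topology\<close>

lemma flim_unique: "flim F s y \<Longrightarrow> flim F s z \<Longrightarrow> y = z"
proof (rule eq_if_diff_in_filtration)
  fix n assume "flim F s y" "flim F s z"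
  then obtain N1 N2 where "\<forall>m\<ge>N1. s m - y \<in> F n" and "\<forall>m\<ge>N2. s m - z \<in> F n"
    unfolding flim_def by blast
  then have "s (max N1 N2) - y \<in> F n" and "s (max N1 N2) - z \<in> F n"
    by auto
  then have "s (max N1 N2) - z - (s (max N1 N2) - y) \<in> F n"
    by (meson filtration_diff)
  then show "y - z \<in> F n" by simp
qed

lemma flimit_eqI: "flim F s y \<Longrightarrow> flimit F s = y"
  unfolding flimit_def using flim_unique by blast

lemma flimit_Cauchy:
  assumes "\<And>n. s (Suc n) - s n \<in> F n"
  shows "flimit F s - s n \<in> F n"
proof -
  obtain y where y: "\<forall>n. y - s n \<in> F n" using filtration_complete assms by blast
  then have "flim F s y" unfolding flim_def
    using filtration_antimonoD filtration_diff_commute by blast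
  then show ?thesis using y by (simp add: flimit_eqI)
qed

lemma funpow_flimit_fixed_point:
  assumes maps: "\<And>x. x \<in> F 1 \<Longrightarrow> T x \<in> F 1"
    and contracts: "\<And>x y k. x \<in> F 1 \<Longrightarrow> y \<in> F 1 \<Longrightarrow> x - y \<in> F k \<Longrightarrow> 1 \<le> k
      \<Longrightarrow> T x - T y \<in> F (Suc k)"
    and x0: "x0 \<in> F 1"
  shows "flimit F (\<lambda>k. (T ^^ k) x0) \<in> F 1
    \<and> T (flimit F (\<lambda>k. (T ^^ k) x0)) = flimit F (\<lambda>k. (T ^^ k) x0)"
proof -
  define s where "s k = (T ^^ k) x0" for k
  have s: "s k \<in> F 1" for k
    unfolding s_def by (induction k) (use x0 maps in simp_all)
  have step: "s (Suc k) - s k \<in> F (Suc k)" for k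
  proof (induction k)
    case 0
    show ?case using maps[OF x0] x0 by (simp add: s_def filtration_diff)
  next
    case (Suc k)
    have "s (Suc (Suc k)) - s (Suc k) = T (s (Suc k)) - T (s k)" by (simp add: s_def)
    also have "\<dots> \<in> F (Suc (Suc k))" by (rule contracts[OF s s Suc]) simp
    finally show ?case .
  qed
  define c where "c = flimit F s"
  have c_s: "c - s n \<in> F n" for n
    unfolding c_def by (rule flimit_Cauchy) (use step filtration_Suc in blast)
  have c: "c \<in> F 1"
    using c_s[of 1] s[of 1] by (metis diff_add_cancel filtration_add)
  have "T c - c \<in> F (Suc n)" for n
  proof (cases n)
    case 0
    then show ?thesis using maps[OF c] c by (simp add: filtration_diff)
  next
    case (Suc m)
    have "T c - c = (T c - T (s n)) + (s (Suc n) - c)" by (simp add: s_def)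
    also have "\<dots> \<in> F (Suc n)"
    proof (rule filtration_add)
      show "T c - T (s n) \<in> F (Suc n)" using contracts[OF c s c_s] Suc by simp
      show "s (Suc n) - c \<in> F (Suc n)" using c_s filtration_diff_commute by blast
    qed
    finally show ?thesis .
  qed
  then have "T c = c"
    by (intro eq_if_diff_in_filtration) (use filtration_Suc in blast)
  then show ?thesis using c by (simp add: c_def s_def[abs_def])
qed

lemma fixed_point_unique:
  assumes "\<And>x y n. x - y \<in> F n \<Longrightarrow> T x - T y \<in> F (Suc n)" and "T y = y" and "T z = z"
  shows "y = z"
proof (rule eq_if_diff_in_filtration)
  fix n show "y - z \<in> F n"
  proof (induction n)
    case 0
    show ?case by (simp add: filtration_0)
  next
    case (Suc n)
    then show ?case using assms(1)[of y z n] assms(2,3) by simp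
  qed
qed

definition fsums :: "(nat \<Rightarrow> 'a) \<Rightarrow> 'a \<Rightarrow> bool" where
  "fsums f y \<longleftrightarrow> (\<forall>N. y - (\<Sum>i<N. f i) \<in> F N)"

lemma fsums_diff_in_filtration:
  assumes "fsums f y" and "fsums g z" and "\<And>n. n < N \<Longrightarrow> f n = g n"
  shows "y - z \<in> F N"
proof -
  have "(\<Sum>i<N. f i) = (\<Sum>i<N. g i)"
    using assms(3) by (intro sum.cong) auto
  then have "y - z = (y - (\<Sum>i<N. f i)) - (z - (\<Sum>i<N. g i))"
    by simp
  then show ?thesis using assms(1,2) unfolding fsums_def by (metis filtration_diff)
qed

lemma fsums_unique: "fsums f y \<Longrightarrow> fsums f z \<Longrightarrow> y = z"
  using fsums_diff_in_filtration eq_if_diff_in_filtration by metis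

lemma fsums_fsuminf: "(\<And>n. f n \<in> F n) \<Longrightarrow> fsums f (fsuminf F f)"
  unfolding fsums_def fsuminf_def by (rule allI, rule flimit_Cauchy) simp

lemma fsums_add: "fsums f y \<Longrightarrow> fsums g z \<Longrightarrow> fsums (\<lambda>n. f n + g n) (y + z)"
  unfolding fsums_def
proof (intro allI)
  fix N assume "\<forall>N. y - sum f {..<N} \<in> F N" "\<forall>N. z - sum g {..<N} \<in> F N"
  then have "(y - sum f {..<N}) + (z - sum g {..<N}) \<in> F N"
    by (simp add: filtration_add)
  moreover have "(y - sum f {..<N}) + (z - sum g {..<N}) = y + z - (\<Sum>n<N. f n + g n)"
    by (simp add: sum.distrib algebra_simps)
  ultimately show "y + z - (\<Sum>n<N. f n + g n) \<in> F N" by simp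
qed

lemma fsums_additive:
  assumes additive: "\<And>x y. R (x + y) = R x + R y"
    and filtration: "\<And>x n. x \<in> F n \<Longrightarrow> R x \<in> F n"
    and "fsums f y"
  shows "fsums (\<lambda>n. R (f n)) (R y)"
proof -
  have diff: "R (x - y) = R x - R y" for x y
    using additive[of "x - y" y] by simp
  have sum: "R (sum f A) = (\<Sum>i\<in>A. R (f i))" for A
    by (induction A rule: infinite_finite_induct) (simp_all add: additive diff[of 0 0, simplified])
  have "R (y - (\<Sum>i<N. f i)) \<in> F N" for N
    using assms(3) by (simp add: fsums_def filtration)
  then show ?thesis by (simp add: fsums_def diff sum)
qed

lemma fsums_smul: "fsums f y \<Longrightarrow> fsums (\<lambda>n. smul c (f n)) (smul c y)"
  by (rule fsums_additive) (simp_all add: smul_add_right filtration_smul)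

lemma fsums_const: "fsums (\<lambda>n. if n = 0 then z else 0) z"
  unfolding fsums_def
proof
  fix N show "z - (\<Sum>n<N. if n = 0 then z else 0) \<in> F N"
    by (cases N) (simp_all add: filtration_0 sum.If_cases lessThan_Suc_eq_insert_0
        image_Suc_lessThan[symmetric] del: lessThan_Suc)
qed

section \<open>Evaluating formal power series\<close>

definition fps_eval :: "'a \<Rightarrow> 'k fps \<Rightarrow> 'a" where
  "fps_eval x f = fsuminf F (\<lambda>n. smul (f $ n) (x ^ n))"

lemma fsums_fps_eval: "x \<in> F 1 \<Longrightarrow> fsums (\<lambda>n. smul (f $ n) (x ^ n)) (fps_eval x f)"
  unfolding fps_eval_def by (rule fsums_fsuminf) (simp add: filtration_smul filtration_power)

lemma fps_eval_eqI: "x \<in> F 1 \<Longrightarrow> fsums (\<lambda>n. smul (f $ n) (x ^ n)) y \<Longrightarrow> fps_eval x f = y"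
  using fsums_fps_eval fsums_unique by blast

lemma fps_eval_diff_in_filtration:
  "x \<in> F 1 \<Longrightarrow> (\<And>n. n < N \<Longrightarrow> f $ n = g $ n) \<Longrightarrow> fps_eval x f - fps_eval x g \<in> F N"
  by (rule fsums_diff_in_filtration[OF fsums_fps_eval fsums_fps_eval]) auto

lemma fps_eval_minus_constant_in_filtration:
  assumes "x \<in> F 1"
  shows "fps_eval x f - smul (f $ 0) 1 \<in> F 1"
proof -
  have "fps_eval x f - (\<Sum>i<1. smul (f $ i) (x ^ i)) \<in> F 1"
    using fsums_fps_eval[OF assms] unfolding fsums_def by blast
  then show ?thesis by simp
qed

lemma fps_eval_in_filtration: "x \<in> F 1 \<Longrightarrow> f $ 0 = 0 \<Longrightarrow> fps_eval x f \<in> F 1"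
  using fps_eval_minus_constant_in_filtration[of x f] by simp

lemma fps_eval_add: "x \<in> F 1 \<Longrightarrow> fps_eval x (f + g) = fps_eval x f + fps_eval x g"
  by (rule fps_eval_eqI) (use fsums_add[OF fsums_fps_eval fsums_fps_eval] in \<open>simp_all add: smul_add_left\<close>)

lemma fps_eval_const_mult: "x \<in> F 1 \<Longrightarrow> fps_eval x (fps_const c * f) = smul c (fps_eval x f)"
  by (rule fps_eval_eqI) (use fsums_smul[OF fsums_fps_eval] in \<open>simp_all add: smul_smul\<close>)

lemma fps_eval_uminus: "x \<in> F 1 \<Longrightarrow> fps_eval x (- f) = - fps_eval x f"
  using fps_eval_const_mult[of x "- 1" f] by (simp add: smul_minus_left flip: fps_const_neg)

lemma fps_eval_diff: "x \<in> F 1 \<Longrightarrow> fps_eval x (f - g) = fps_eval x f - fps_eval x g"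
  using fps_eval_add[of x f "- g"] fps_eval_uminus by simp

lemma fps_eval_zero: "x \<in> F 1 \<Longrightarrow> fps_eval x 0 = 0"
  using fps_eval_const_mult[of x 0 0] by simp

lemma fps_eval_sum: "x \<in> F 1 \<Longrightarrow> fps_eval x (sum f A) = (\<Sum>i\<in>A. fps_eval x (f i))"
  by (induction A rule: infinite_finite_induct) (simp_all add: fps_eval_zero fps_eval_add)

lemma fps_eval_one: "x \<in> F 1 \<Longrightarrow> fps_eval x 1 = 1"
proof (rule fps_eval_eqI)
  have "(\<lambda>n. smul (1 $ n) (x ^ n)) = (\<lambda>n. if n = 0 then 1 else 0)"
    by (simp add: fun_eq_iff)
  then show "fsums (\<lambda>n. smul (1 $ n) (x ^ n)) 1"
    using fsums_const[of 1] by simp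
qed

lemma fps_eval_X: "x \<in> F 1 \<Longrightarrow> fps_eval x fps_X = x"
proof (rule fps_eval_eqI)
  assume x: "x \<in> F 1"
  show "fsums (\<lambda>n. smul (fps_X $ n) (x ^ n)) x"
    unfolding fsums_def
  proof
    fix N show "x - (\<Sum>n<N. smul (fps_X $ n) (x ^ n)) \<in> F N"
    proof (cases "N \<le> 1")
      case True
      then have "N = 0 \<or> N = 1" by auto
      then show ?thesis using x by (auto simp: filtration_0)
    next
      case False
      have "(\<Sum>n<N. smul (fps_X $ n) (x ^ n)) = (\<Sum>n\<in>{1}. smul (fps_X $ n) (x ^ n))"
        by (rule sum.mono_neutral_right) (use False in \<open>auto simp: fps_X_nth\<close>)
      then show ?thesis by (simp add: fps_X_nth)
    qed
  qed
qed

lemma fps_partial_sums_mult_diff_in_filtration: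
  assumes x: "x \<in> F 1"
  shows "(\<Sum>i<N. smul (f $ i) (x ^ i)) * (\<Sum>j<N. smul (g $ j) (x ^ j))
           - (\<Sum>n<N. smul ((f * g) $ n) (x ^ n)) \<in> F N"
proof -
  define h where "h i j = smul (f $ i * g $ j) (x ^ (i + j))" for i j
  define A where "A = {..<N} \<times> {..<N}"
  define T where "T = {(i, j). i + j < N}"
  have "smul (f $ i) (x ^ i) * smul (g $ j) (x ^ j) = h i j" for i j
    by (simp add: h_def smul_mult_left smul_mult_right smul_smul power_add mult.commute)
  then have product: "(\<Sum>i<N. smul (f $ i) (x ^ i)) * (\<Sum>j<N. smul (g $ j) (x ^ j))
      = (\<Sum>(i, j)\<in>A. h i j)"
    by (simp add: sum_product A_def sum.cartesian_product)
  have "(\<Sum>n<N. smul ((f * g) $ n) (x ^ n)) = (\<Sum>n<N. \<Sum>i\<le>n. h i (n - i))"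
    by (simp add: h_def fps_mult_nth atLeast0AtMost smul_sum_left)
  also have "\<dots> = (\<Sum>(i, j)\<in>T. h i j)"
    unfolding T_def by (rule sum.triangle_reindex[symmetric])
  finally have cauchy: "(\<Sum>n<N. smul ((f * g) $ n) (x ^ n)) = (\<Sum>(i, j)\<in>T. h i j)" .
  \<comment> \<open>the two sides differ by the terms with \<open>i + j \<ge> N\<close>, which lie in \<open>F N\<close>\<close>
  have "T \<subseteq> A" and "finite A" by (auto simp: T_def A_def)
  then have "(\<Sum>(i, j)\<in>A. h i j) - (\<Sum>(i, j)\<in>T. h i j) = (\<Sum>(i, j)\<in>A - T. h i j)"
    using sum.subset_diff[of T A "\<lambda>(i, j). h i j"] by simp
  moreover have "(\<Sum>(i, j)\<in>A - T. h i j) \<in> F N"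
  proof (rule filtration_sum)
    fix p assume "p \<in> A - T"
    then obtain i j where "p = (i, j)" and "N \<le> i + j"
      by (cases p) (simp add: T_def not_less)
    moreover have "h i j \<in> F (i + j)"
      unfolding h_def by (intro filtration_smul filtration_power x)
    ultimately show "(case p of (i, j) \<Rightarrow> h i j) \<in> F N"
      using filtration_antimonoD by auto
  qed
  ultimately show ?thesis by (simp add: product cauchy)
qed

lemma fps_eval_mult:
  assumes x: "x \<in> F 1"
  shows "fps_eval x (f * g) = fps_eval x f * fps_eval x g"
proof (rule eq_if_diff_in_filtration[symmetric])
  fix N
  define Sf where "Sf = (\<Sum>i<N. smul (f $ i) (x ^ i))"
  define Sg where "Sg = (\<Sum>i<N. smul (g $ i) (x ^ i))"
  define Sfg where "Sfg = (\<Sum>n<N. smul ((f * g) $ n) (x ^ n))"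
  have "fps_eval x f - Sf \<in> F N" "fps_eval x g - Sg \<in> F N" "fps_eval x (f * g) - Sfg \<in> F N"
    using fsums_fps_eval[OF x] by (simp_all add: fsums_def Sf_def Sg_def Sfg_def)
  moreover have "Sf * Sg - Sfg \<in> F N"
    unfolding Sf_def Sg_def Sfg_def by (rule fps_partial_sums_mult_diff_in_filtration[OF x])
  moreover have "fps_eval x f * fps_eval x g - fps_eval x (f * g)
    = (fps_eval x f - Sf) * fps_eval x g + Sf * (fps_eval x g - Sg) + (Sf * Sg - Sfg)
      - (fps_eval x (f * g) - Sfg)"
    by (simp add: algebra_simps)
  ultimately show "fps_eval x f * fps_eval x g - fps_eval x (f * g) \<in> F N"
    by (metis filtration_add filtration_diff filtration_mult_left filtration_mult_right)
qed

lemma fps_eval_power: "x \<in> F 1 \<Longrightarrow> fps_eval x (f ^ n) = fps_eval x f ^ n"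
  by (induction n) (simp_all add: fps_eval_one fps_eval_mult)

lemma fps_eval_compose:
  assumes x: "x \<in> F 1" and g0: "g $ 0 = 0"
  shows "fps_eval x (f oo g) = fps_eval (fps_eval x g) f"
proof (rule eq_if_diff_in_filtration[symmetric])
  fix N
  define y where "y = fps_eval x g"
  have y: "y \<in> F 1" unfolding y_def by (rule fps_eval_in_filtration[OF x g0])
  define H where "H = (\<Sum>i<N. fps_const (f $ i) * g ^ i)"
  have "fps_eval x H = (\<Sum>i<N. smul (f $ i) (y ^ i))"
    by (simp add: H_def fps_eval_sum[OF x] fps_eval_const_mult[OF x] fps_eval_power[OF x] y_def)
  then have "fps_eval y f - fps_eval x H \<in> F N"
    using fsums_fps_eval[OF y, of f] by (simp add: fsums_def)
  moreover have "fps_eval x H - fps_eval x (f oo g) \<in> F N"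
  proof (rule fps_eval_diff_in_filtration[OF x])
    fix n assume n: "n < N"
    have "H $ n = (\<Sum>i<N. f $ i * (g ^ i) $ n)" by (simp add: H_def fps_sum_nth)
    also have "\<dots> = (\<Sum>i\<in>{0..n}. f $ i * (g ^ i) $ n)"
      using n startsby_zero_power_prefix[OF g0] by (intro sum.mono_neutral_right) auto
    finally show "H $ n = (f oo g) $ n" by (simp add: fps_compose_nth)
  qed
  ultimately have "(fps_eval y f - fps_eval x H) + (fps_eval x H - fps_eval x (f oo g)) \<in> F N"
    by (rule filtration_add)
  then show "fps_eval (fps_eval x g) f - fps_eval x (f oo g) \<in> F N"
    by (simp add: y_def)
qed

lemma fps_eval_diff_linear_part:
  assumes x: "x \<in> F 1" and y: "y \<in> F 1" and d: "x - y \<in> F k" and k: "1 \<le> k"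
  shows "fps_eval x f - fps_eval y f - smul (f $ 1) (x - y) \<in> F (Suc k)"
proof -
  define Sx where "Sx = (\<Sum>n<Suc k. smul (f $ n) (x ^ n))"
  define Sy where "Sy = (\<Sum>n<Suc k. smul (f $ n) (y ^ n))"
  define R where "R = (\<Sum>n\<in>{..<Suc k} - {1}. smul (f $ n) (x ^ n - y ^ n))"
  have "Sx - Sy = (\<Sum>n<Suc k. smul (f $ n) (x ^ n - y ^ n))"
    by (simp add: Sx_def Sy_def sum_subtractf smul_diff_right)
  also have "\<dots> = smul (f $ 1) (x - y) + R"
    unfolding R_def by (subst sum.remove[of _ 1]) (use k in auto)
  finally have split: "fps_eval x f - fps_eval y f - smul (f $ 1) (x - y)
      = (fps_eval x f - Sx) - (fps_eval y f - Sy) + R"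
    by (simp add: algebra_simps)
  have "fps_eval x f - Sx \<in> F (Suc k)" "fps_eval y f - Sy \<in> F (Suc k)"
    using fsums_fps_eval[OF x, of f] fsums_fps_eval[OF y, of f] unfolding fsums_def Sx_def Sy_def
    by blast+
  moreover have "R \<in> F (Suc k)" unfolding R_def
  proof (rule filtration_sum)
    fix n assume n: "n \<in> {..<Suc k} - {1}"
    show "smul (f $ n) (x ^ n - y ^ n) \<in> F (Suc k)"
    proof (cases n)
      case (Suc m)
      with n have "x ^ Suc m - y ^ Suc m \<in> F (k + m)" and "Suc k \<le> k + m"
        using power_diff_in_filtration[OF x y d] by auto
      then show ?thesis using Suc filtration_antimonoD filtration_smul by blast
    qed simp
  qed
  ultimately show ?thesis
    unfolding split by (rule filtration_add[OF filtration_diff])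
qed

section \<open>Exponential, logarithm and BCH series\<close>

abbreviation Exp :: "'a \<Rightarrow> 'a" where "Exp \<equiv> fexp smul F"
abbreviation Log :: "'a \<Rightarrow> 'a" where "Log \<equiv> flog smul F"

lemma fexp_eq_fps_eval: "Exp x = fps_eval x (fps_exp 1)"
  unfolding fexp_def fps_eval_def by (simp add: divide_inverse)

lemma flog_eq_fps_eval: "Log u = fps_eval (u - 1) (fps_ln 1)"
  unfolding flog_def fps_eval_def
proof (intro arg_cong[where f = "fsuminf F"] ext)
  fix n
  show "(if n = 0 then 0 else smul ((- 1) ^ (n + 1) / of_nat n) ((u - 1) ^ n))
    = smul (fps_ln 1 $ n) ((u - 1) ^ n)"
    by (cases n) (simp_all add: fps_ln_nth)
qed

lemma fsums_fexp: "x \<in> F 1 \<Longrightarrow> fsums (\<lambda>n. smul (fps_exp 1 $ n) (x ^ n)) (Exp x)"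
  unfolding fexp_eq_fps_eval by (rule fsums_fps_eval)

lemma fexp_minus_one_eq_fps_eval: "x \<in> F 1 \<Longrightarrow> Exp x - 1 = fps_eval x (fps_exp 1 - 1)"
  by (simp add: fexp_eq_fps_eval fps_eval_diff fps_eval_one)

lemma fexp_minus_one_in_filtration: "x \<in> F 1 \<Longrightarrow> Exp x - 1 \<in> F 1"
  using fps_eval_in_filtration[of x "fps_exp 1 - 1"] by (simp add: fexp_minus_one_eq_fps_eval)

lemma flog_in_filtration: "u - 1 \<in> F 1 \<Longrightarrow> Log u \<in> F 1"
  using fps_eval_in_filtration[of "u - 1" "fps_ln 1"] by (simp add: flog_eq_fps_eval)

lemma flog_fexp: "x \<in> F 1 \<Longrightarrow> Log (Exp x) = x"
proof -
  assume x: "x \<in> F 1"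
  have "Log (Exp x) = fps_eval (fps_eval x (fps_exp 1 - 1)) (fps_ln 1)"
    by (simp add: flog_eq_fps_eval fexp_minus_one_eq_fps_eval[OF x])
  also have "\<dots> = fps_eval x (fps_ln 1 oo (fps_exp 1 - 1))"
    by (rule fps_eval_compose[symmetric, OF x]) simp
  also have "fps_ln 1 oo (fps_exp 1 - 1) = (fps_X :: 'k fps)"
    using fps_ln_fps_exp_inv[of "1::'k"] fps_inv_fps_exp_compose(1)[of "1::'k"] by simp
  finally show ?thesis by (simp add: fps_eval_X[OF x])
qed

lemma fexp_flog: "u - 1 \<in> F 1 \<Longrightarrow> Exp (Log u) = u"
proof -
  assume u: "u - 1 \<in> F 1"
  have "Exp (Log u) - 1 = fps_eval (fps_eval (u - 1) (fps_ln 1)) (fps_exp 1 - 1)"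
    using fexp_minus_one_eq_fps_eval[OF flog_in_filtration[OF u]] by (simp add: flog_eq_fps_eval)
  also have "\<dots> = fps_eval (u - 1) ((fps_exp 1 - 1) oo fps_ln 1)"
    by (rule fps_eval_compose[symmetric, OF u]) simp
  also have "(fps_exp 1 - 1) oo fps_ln 1 = (fps_X :: 'k fps)"
    using fps_ln_fps_exp_inv[of "1::'k"] fps_inv_fps_exp_compose(2)[of "1::'k"] by simp
  finally show ?thesis by (simp add: fps_eval_X[OF u])
qed

lemma fexp_mult_fexp_uminus: "x \<in> F 1 \<Longrightarrow> Exp x * Exp (- x) = 1"
proof -
  assume x: "x \<in> F 1"
  have "Exp (- x) = fps_eval (fps_eval x (- fps_X)) (fps_exp 1)"
    by (simp add: fexp_eq_fps_eval fps_eval_uminus[OF x] fps_eval_X[OF x])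
  also have "\<dots> = fps_eval x (fps_exp (- 1))"
    by (subst fps_eval_compose[symmetric, OF x]) simp_all
  finally have "Exp x * Exp (- x) = fps_eval x (fps_exp 1 * fps_exp (- 1))"
    by (simp add: fexp_eq_fps_eval fps_eval_mult[OF x])
  also have "fps_exp 1 * fps_exp (- 1) = (1 :: 'k fps)"
    by (simp flip: fps_exp_add_mult)
  finally show ?thesis by (simp add: fps_eval_one[OF x])
qed

lemma fexp_uminus_mult_fexp: "x \<in> F 1 \<Longrightarrow> Exp (- x) * Exp x = 1"
  using fexp_mult_fexp_uminus[of "- x"] filtration_uminus by simp

lemma rinv_fexp: "x \<in> F 1 \<Longrightarrow> rinv (Exp x) = Exp (- x)"
  by (simp add: rinv_eqI fexp_mult_fexp_uminus fexp_uminus_mult_fexp)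

lemma fexp_diff_linear_part:
  "x \<in> F 1 \<Longrightarrow> y \<in> F 1 \<Longrightarrow> x - y \<in> F k \<Longrightarrow> 1 \<le> k \<Longrightarrow> Exp x - Exp y - (x - y) \<in> F (Suc k)"
  using fps_eval_diff_linear_part[of x y k "fps_exp 1"] by (simp add: fexp_eq_fps_eval)

lemma flog_diff_linear_part:
  "u - 1 \<in> F 1 \<Longrightarrow> v - 1 \<in> F 1 \<Longrightarrow> u - v \<in> F k \<Longrightarrow> 1 \<le> k \<Longrightarrow> Log u - Log v - (u - v) \<in> F (Suc k)"
  using fps_eval_diff_linear_part[of "u - 1" "v - 1" k "fps_ln 1"] by (simp add: flog_eq_fps_eval fps_ln_nth)

lemma fexp_diff_in_filtration:
  assumes "x \<in> F 1" "y \<in> F 1" "x - y \<in> F k" "1 \<le> k"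
  shows "Exp x - Exp y \<in> F k"
proof -
  have "Exp x - Exp y = (Exp x - Exp y - (x - y)) + (x - y)" by simp
  also have "\<dots> \<in> F k"
    using fexp_diff_linear_part[OF assms] filtration_Suc assms(3) by (intro filtration_add) blast+
  finally show ?thesis .
qed

lemma fexp_mult_fexp_minus_one_in_filtration: "x \<in> F 1 \<Longrightarrow> y \<in> F 1 \<Longrightarrow> Exp x * Exp y - 1 \<in> F 1"
proof -
  assume "x \<in> F 1" "y \<in> F 1"
  moreover have "Exp x * Exp y - 1 = (Exp x - 1) * Exp y + (Exp y - 1)" by (simp add: algebra_simps)
  ultimately show ?thesis
    by (metis fexp_minus_one_in_filtration filtration_add filtration_mult_right)
qed

lemma BCH_in_filtration: "x \<in> F 1 \<Longrightarrow> y \<in> F 1 \<Longrightarrow> BCH smul F x y \<in> F 1"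
  unfolding BCH_def
  by (intro filtration_diff flog_in_filtration fexp_mult_fexp_minus_one_in_filtration)

lemma BCH_diff_in_filtration:
  assumes x: "x \<in> F 1" "x' \<in> F 1" and y: "y \<in> F 1" "y' \<in> F 1"
    and d: "x - x' \<in> F k" "y - y' \<in> F k" and k: "1 \<le> k"
  shows "BCH smul F x y - BCH smul F x' y' \<in> F (Suc k)"
proof -
  define U where "U = Exp x * Exp y"
  define U' where "U' = Exp x' * Exp y'"
  have "(Exp x - Exp x') * (Exp y - 1) \<in> F (k + 1)"
    by (intro filtration_mult fexp_diff_in_filtration fexp_minus_one_in_filtration x y d k)
  moreover have "(Exp x' - 1) * (Exp y - Exp y') \<in> F (1 + k)"
    by (intro filtration_mult fexp_diff_in_filtration fexp_minus_one_in_filtration x y d k)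
  ultimately have products: "(Exp x - Exp x') * (Exp y - 1) \<in> F (Suc k)"
    "(Exp x' - 1) * (Exp y - Exp y') \<in> F (Suc k)"
    by simp_all
  have "U - U' - ((x - x') + (y - y')) = (Exp x - Exp x' - (x - x')) + (Exp x - Exp x') * (Exp y - 1)
      + (Exp y - Exp y' - (y - y')) + (Exp x' - 1) * (Exp y - Exp y')"
    by (simp add: U_def U'_def algebra_simps)
  also have "\<dots> \<in> F (Suc k)"
    by (intro filtration_add products fexp_diff_linear_part x y d k)
  finally have U: "U - U' - ((x - x') + (y - y')) \<in> F (Suc k)" .
  have "U - U' = (U - U' - ((x - x') + (y - y'))) + (x - x') + (y - y')" by simp
  also have "\<dots> \<in> F k"
    using U d filtration_Suc by (intro filtration_add) blast+
  finally have "U - U' \<in> F k" .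
  moreover have "U - 1 \<in> F 1" "U' - 1 \<in> F 1"
    unfolding U_def U'_def by (intro fexp_mult_fexp_minus_one_in_filtration x y)+
  ultimately have L: "Log U - Log U' - (U - U') \<in> F (Suc k)"
    using k by (intro flog_diff_linear_part)
  have "BCH smul F x y - BCH smul F x' y'
      = (Log U - Log U' - (U - U')) + (U - U' - ((x - x') + (y - y')))"
    by (simp add: BCH_def U_def U'_def algebra_simps)
  also have "\<dots> \<in> F (Suc k)" by (rule filtration_add[OF L U])
  finally show ?thesis .
qed

end

section \<open>Complete filtered Rota--Baxter algebras\<close>

locale complete_filtered_rb_algebra = complete_filtered_algebra smul F
  for smul :: "'k::field_char_0 \<Rightarrow> 'a::ring_1 \<Rightarrow> 'a" and F +
  fixes P :: "'a \<Rightarrow> 'a" and \<theta> :: 'k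
  assumes rota_baxter: "is_rota_baxter smul P \<theta>"
    and filtration_P: "x \<in> F n \<Longrightarrow> P x \<in> F n"

lemma complete_filtered_rb_algebraI:
  assumes "complete_filtered_rb smul P \<theta> F"
  shows "complete_filtered_rb_algebra smul F P \<theta>"
  by unfold_locales (use assms in \<open>auto simp: complete_filtered_rb_def is_rb_ideal_def\<close>)

context complete_filtered_rb_algebra
begin

abbreviation Pt :: "'a \<Rightarrow> 'a" where "Pt \<equiv> Ptilde smul P \<theta>"

lemma P_add: "P (x + y) = P x + P y"
  using rota_baxter by (simp add: is_rota_baxter_def)

lemma P_smul: "P (smul c x) = smul c (P x)"
  using rota_baxter by (simp add: is_rota_baxter_def)

lemma P_rota_baxter: "P x * P y + smul \<theta> (P (x * y)) = P (x * P y) + P (P x * y)"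
  using rota_baxter by (simp add: is_rota_baxter_def)

lemma P_diff: "P (x - y) = P x - P y"
  using P_add[of "x - y" y] by simp

lemma P_uminus: "P (- x) = - P x"
  using P_diff[of 0 x] P_diff[of 0 0] by simp

lemma Pt_add: "Pt (x + y) = Pt x + Pt y"
  by (simp add: Ptilde_def smul_add_right P_add)

lemma Pt_smul: "Pt (smul c x) = smul c (Pt x)"
  by (simp add: Ptilde_def smul_diff_right P_smul smul_smul mult.commute)

lemma Pt_diff: "Pt (x - y) = Pt x - Pt y"
  by (simp add: Ptilde_def smul_diff_right P_diff)

lemma Pt_uminus: "Pt (- x) = - Pt x"
  by (simp add: Ptilde_def smul_minus_right P_uminus)

lemma filtration_Pt: "x \<in> F n \<Longrightarrow> Pt x \<in> F n"
  by (simp add: Ptilde_def filtration_diff filtration_smul filtration_P)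

lemma P_plus_Pt: "P x + Pt x = smul \<theta> x"
  by (simp add: Ptilde_def)

lemma P_Pt_commute: "P (Pt x) = Pt (P x)"
  by (simp add: Ptilde_def P_diff P_smul)

definition rb_mult :: "'a \<Rightarrow> 'a \<Rightarrow> 'a" where
  "rb_mult x y = x * P y + P x * y - smul \<theta> (x * y)"

lemma P_rb_mult: "P (rb_mult x y) = P x * P y"
  using P_rota_baxter[of x y] by (simp add: rb_mult_def P_add P_diff P_smul algebra_simps)

lemma Pt_rb_mult: "Pt (rb_mult x y) = - (Pt x * Pt y)"
  using P_rb_mult[of x y]
  by (simp add: Ptilde_def rb_mult_def algebra_simps smul_mult_left smul_mult_right smul_smul
      smul_diff_right smul_add_right)

lemma P_Pt_rb_power:
  "P ((rb_mult c ^^ m) c) = P c ^ Suc m \<and> - Pt ((rb_mult c ^^ m) c) = (- Pt c) ^ Suc m"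
  by (induction m) (simp_all add: P_rb_mult Pt_rb_mult)

lemma Pt_power_P_plus_P_power_uminus_Pt:
  assumes "0 < n"
  shows "Pt (P c ^ n) + P ((- Pt c) ^ n) = 0"
proof -
  obtain m where n: "n = Suc m" using assms gr0_implies_Suc by blast
  define \<alpha> where "\<alpha> = (rb_mult c ^^ m) c"
  have "P c ^ n = P \<alpha>" and "(- Pt c) ^ n = - Pt \<alpha>"
    using P_Pt_rb_power[where c = c and m = m] by (simp_all add: n \<alpha>_def)
  then show ?thesis by (simp add: P_uminus P_Pt_commute)
qed

lemma Pt_fexp_P_plus_P_fexp_uminus_Pt:
  assumes c: "c \<in> F 1"
  shows "Pt (Exp (P c)) + P (Exp (- Pt c)) = smul \<theta> 1"
proof -
  have "fsums (\<lambda>n. Pt (smul (fps_exp 1 $ n) (P c ^ n)) + P (smul (fps_exp 1 $ n) ((- Pt c) ^ n)))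
      (Pt (Exp (P c)) + P (Exp (- Pt c)))"
    using c by (intro fsums_add fsums_additive[where R = Pt] fsums_additive[where R = P] fsums_fexp)
      (simp_all add: Pt_add P_add filtration_Pt filtration_P filtration_uminus)
  moreover have "Pt (smul (fps_exp 1 $ n) (P c ^ n)) + P (smul (fps_exp 1 $ n) ((- Pt c) ^ n))
      = (if n = 0 then smul \<theta> 1 else 0)" for n
  proof (cases "n = 0")
    case True
    then show ?thesis using P_plus_Pt[of 1] by (simp add: add.commute)
  next
    case False
    then have "Pt (P c ^ n) + P ((- Pt c) ^ n) = 0"
      by (simp add: Pt_power_P_plus_P_power_uminus_Pt)
    then show ?thesis using False by (simp add: Pt_smul P_smul flip: smul_add_right)
  qed
  ultimately show ?thesis using fsums_const fsums_unique by auto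
qed

definition chi_step :: "'a \<Rightarrow> 'a \<Rightarrow> 'a" where
  "chi_step a x = a - smul (inverse \<theta>) (BCH smul F (P x) (Pt x))"

lemma chi_iter_eq_funpow: "chi_iter smul P \<theta> F a = (\<lambda>k. (chi_step a ^^ k) a)"
proof
  fix k show "chi_iter smul P \<theta> F a k = (chi_step a ^^ k) a"
    by (induction k) (simp_all add: chi_step_def)
qed

lemma chi_step_in_filtration: "a \<in> F 1 \<Longrightarrow> x \<in> F 1 \<Longrightarrow> chi_step a x \<in> F 1"
  unfolding chi_step_def
  by (intro filtration_diff filtration_smul BCH_in_filtration filtration_P filtration_Pt)

lemma chi_step_diff_in_filtration:
  assumes "x \<in> F 1" "y \<in> F 1" "x - y \<in> F k" "1 \<le> k"
  shows "chi_step a x - chi_step a y \<in> F (Suc k)"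
proof -
  have "BCH smul F (P x) (Pt x) - BCH smul F (P y) (Pt y) \<in> F (Suc k)"
    using assms by (intro BCH_diff_in_filtration filtration_P filtration_Pt)
      (simp_all add: filtration_P filtration_Pt flip: P_diff Pt_diff)
  then have "- smul (inverse \<theta>) (BCH smul F (P x) (Pt x) - BCH smul F (P y) (Pt y)) \<in> F (Suc k)"
    by (intro filtration_uminus filtration_smul)
  then show ?thesis by (simp add: chi_step_def smul_diff_right)
qed

lemma chi_fixed_point:
  assumes "a \<in> F 1"
  shows "chi smul P \<theta> F a \<in> F 1 \<and> chi_step a (chi smul P \<theta> F a) = chi smul P \<theta> F a"
  unfolding chi_def chi_iter_eq_funpow
  by (rule funpow_flimit_fixed_point)
    (use assms chi_step_in_filtration chi_step_diff_in_filtration in simp_all)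

lemma fexp_factorization_if_chi_step_fixed:
  assumes \<theta>: "\<theta> \<noteq> 0" and c: "c \<in> F 1" and fixed: "chi_step a c = c"
  shows "Exp (smul \<theta> a) = Exp (P c) * Exp (Pt c)"
proof -
  have "smul (inverse \<theta>) (BCH smul F (P c) (Pt c)) = a - c"
    using fixed by (simp add: chi_step_def algebra_simps)
  then have "BCH smul F (P c) (Pt c) = smul \<theta> (a - c)"
    by (metis smul_smul_inverse[OF \<theta>])
  then have "Log (Exp (P c) * Exp (Pt c)) = smul \<theta> a"
    using P_plus_Pt[of c] by (simp add: BCH_def smul_diff_right algebra_simps)
  then show ?thesis
    using fexp_flog[OF fexp_mult_fexp_minus_one_in_filtration] c filtration_P filtration_Pt by metis
qed

lemma eq_add_BCH_uminus_P_if_fexp_factorization: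
  assumes \<theta>: "\<theta> \<noteq> 0" and c: "c \<in> F 1" and factor: "Exp (smul \<theta> a) = Exp (P c) * Exp (Pt c)"
  shows "c = a + smul (inverse \<theta>) (BCH smul F (- P c) (smul \<theta> a))"
proof -
  have "Exp (- P c) * Exp (smul \<theta> a) = Exp (Pt c)"
    using fexp_uminus_mult_fexp[OF filtration_P[OF c]] by (simp add: factor mult.assoc[symmetric])
  then have "BCH smul F (- P c) (smul \<theta> a) = Pt c + P c - smul \<theta> a"
    using flog_fexp[OF filtration_Pt[OF c]] by (simp add: BCH_def)
  also have "\<dots> = smul \<theta> (c - a)"
    using P_plus_Pt[of c] by (simp add: smul_diff_right algebra_simps)
  finally show ?thesis by (simp add: smul_inverse_smul[OF \<theta>])
qed

lemma fexp_uminus_P_solves: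
  assumes \<theta>: "\<theta> \<noteq> 0" and c: "c \<in> F 1" and b: "smul \<theta> b = Exp (P c) * Exp (Pt c) - 1"
  shows "Exp (- P c) = 1 - P (Exp (- P c) * b)"
proof -
  let ?x = "Exp (- P c)"
  have "smul \<theta> (?x * b) = Exp (Pt c) - ?x"
    using fexp_uminus_mult_fexp[OF filtration_P[OF c]]
    by (simp add: b flip: smul_mult_right) (simp add: algebra_simps mult.assoc[symmetric])
  then have "smul \<theta> (P (?x * b)) = P (Exp (Pt c)) - P ?x"
    by (simp flip: P_smul P_diff)
  also have "P (Exp (Pt c)) = smul \<theta> 1 - Pt ?x"
    using Pt_fexp_P_plus_P_fexp_uminus_Pt[of "- c"] c filtration_uminus
    by (simp add: P_uminus Pt_uminus algebra_simps)
  finally have "smul \<theta> (P (?x * b)) = smul \<theta> (1 - ?x)"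
    using P_plus_Pt[of ?x] by (simp add: smul_diff_right algebra_simps)
  then have "P (?x * b) = 1 - ?x" by (simp add: smul_left_cancel[OF \<theta>])
  then show ?thesis by simp
qed

lemma fexp_uminus_Pt_solves:
  assumes \<theta>: "\<theta> \<noteq> 0" and c: "c \<in> F 1" and b: "smul \<theta> b = Exp (P c) * Exp (Pt c) - 1"
  shows "Exp (- Pt c) = 1 - Pt (b * Exp (- Pt c))"
proof -
  let ?x = "Exp (- Pt c)"
  have "smul \<theta> (b * ?x) = Exp (P c) - ?x"
    using fexp_mult_fexp_uminus[OF filtration_Pt[OF c]]
    by (simp add: b flip: smul_mult_left) (simp add: algebra_simps mult.assoc)
  then have "smul \<theta> (Pt (b * ?x)) = Pt (Exp (P c)) - Pt ?x"
    by (simp flip: Pt_smul Pt_diff)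
  also have "Pt (Exp (P c)) = smul \<theta> 1 - P ?x"
    using Pt_fexp_P_plus_P_fexp_uminus_Pt[OF c] by (simp add: algebra_simps)
  finally have "smul \<theta> (Pt (b * ?x)) = smul \<theta> (1 - ?x)"
    using P_plus_Pt[of ?x] by (simp add: smul_diff_right algebra_simps)
  then have "Pt (b * ?x) = 1 - ?x" by (simp add: smul_left_cancel[OF \<theta>])
  then show ?thesis by simp
qed

lemma P_equation_unique:
  assumes "b \<in> F 1" and "y = 1 - P (y * b)" and "z = 1 - P (z * b)"
  shows "y = z"
proof (rule fixed_point_unique[where T = "\<lambda>y. 1 - P (y * b)"])
  fix x y n assume "x - y \<in> F n"
  then have "(y - x) * b \<in> F (n + 1)"
    using assms(1) by (rule filtration_mult[OF filtration_diff_commute])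
  then have "P ((y - x) * b) \<in> F (Suc n)" by (simp add: filtration_P)
  then show "(1 - P (x * b)) - (1 - P (y * b)) \<in> F (Suc n)"
    by (simp add: P_diff algebra_simps)
qed (use assms in simp_all)

lemma Pt_equation_unique:
  assumes "b \<in> F 1" and "y = 1 - Pt (b * y)" and "z = 1 - Pt (b * z)"
  shows "y = z"
proof (rule fixed_point_unique[where T = "\<lambda>y. 1 - Pt (b * y)"])
  fix x y n assume "x - y \<in> F n"
  then have "b * (y - x) \<in> F (1 + n)"
    using assms(1) filtration_mult filtration_diff_commute by blast
  then have "Pt (b * (y - x)) \<in> F (Suc n)" by (simp add: filtration_Pt)
  then show "(1 - Pt (b * x)) - (1 - Pt (b * y)) \<in> F (Suc n)"
    by (simp add: Pt_diff algebra_simps)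
qed (use assms in simp_all)

lemma rinv_fexp_unique_solutions:
  assumes \<theta>: "\<theta> \<noteq> 0" and c: "c \<in> F 1" and b: "1 + smul \<theta> b = Exp (P c) * Exp (Pt c)"
  shows "let x = rinv (Exp (P c)); x' = rinv (Exp (Pt c))
    in x = 1 - P (x * b) \<and> (\<forall>y. y = 1 - P (y * b) \<longrightarrow> y = x)
     \<and> x' = 1 - Pt (b * x') \<and> (\<forall>y. y = 1 - Pt (b * y) \<longrightarrow> y = x')"
proof -
  have b': "smul \<theta> b = Exp (P c) * Exp (Pt c) - 1"
    using b by (simp add: algebra_simps)
  moreover have "Exp (P c) * Exp (Pt c) - 1 \<in> F 1"
    by (intro fexp_mult_fexp_minus_one_in_filtration filtration_P filtration_Pt c)
  ultimately have "smul \<theta> b \<in> F 1" by simp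
  then have b_F: "b \<in> F 1"
    using filtration_smul[of "smul \<theta> b" 1 "inverse \<theta>"] by (simp add: smul_inverse_smul \<theta>)
  have x: "Exp (- P c) = 1 - P (Exp (- P c) * b)"
    by (rule fexp_uminus_P_solves[OF \<theta> c b'])
  have x': "Exp (- Pt c) = 1 - Pt (b * Exp (- Pt c))"
    by (rule fexp_uminus_Pt_solves[OF \<theta> c b'])
  have rinv: "rinv (Exp (P c)) = Exp (- P c)" "rinv (Exp (Pt c)) = Exp (- Pt c)"
    by (intro rinv_fexp filtration_P filtration_Pt c)+
  show ?thesis
    unfolding Let_def rinv
    using x x' P_equation_unique[OF b_F _ x] Pt_equation_unique[OF b_F _ x'] by blast
qed

end

theorem proposition2p12:
  fixes smul :: "'k::field_char_0 \<Rightarrow> 'a::ring_1 \<Rightarrow> 'a"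
    and P :: "'a \<Rightarrow> 'a" and \<theta> :: 'k and F :: "nat \<Rightarrow> 'a set" and a :: 'a
  assumes "\<theta> \<noteq> 0"
    and "complete_filtered_rb smul P \<theta> F"
    and "a \<in> F 1"
  shows "chi smul P \<theta> F a \<in> F 1
   \<and> chi smul P \<theta> F a = a - smul (inverse \<theta>)
        (BCH smul F (P (chi smul P \<theta> F a)) (Ptilde smul P \<theta> (chi smul P \<theta> F a)))
   \<and> chi smul P \<theta> F a = a + smul (inverse \<theta>)
        (BCH smul F (- P (chi smul P \<theta> F a)) (smul \<theta> a))
   \<and> fexp smul F (smul \<theta> a) =
        fexp smul F (P (chi smul P \<theta> F a)) * fexp smul F (Ptilde smul P \<theta> (chi smul P \<theta> F a))
   \<and> (\<forall>b. 1 + smul \<theta> b = fexp smul F (smul \<theta> a) \<longrightarrow>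
        (let x = rinv (fexp smul F (P (chi smul P \<theta> F a)));
             x' = rinv (fexp smul F (Ptilde smul P \<theta> (chi smul P \<theta> F a)))
         in x = 1 - P (x * b) \<and> (\<forall>y. y = 1 - P (y * b) \<longrightarrow> y = x)
          \<and> x' = 1 - Ptilde smul P \<theta> (b * x') \<and> (\<forall>y. y = 1 - Ptilde smul P \<theta> (b * y) \<longrightarrow> y = x')))"
proof -
  interpret complete_filtered_rb_algebra smul F P \<theta>
    using assms(2) by (rule complete_filtered_rb_algebraI)
  define c where "c = chi smul P \<theta> F a"
  have c: "c \<in> F 1" and fixed: "chi_step a c = c"
    using chi_fixed_point[OF assms(3)] by (simp_all add: c_def)
  have factor: "Exp (smul \<theta> a) = Exp (P c) * Exp (Pt c)"
    by (rule fexp_factorization_if_chi_step_fixed[OF assms(1) c fixed])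
  show ?thesis
    using c fixed factor eq_add_BCH_uminus_P_if_fexp_factorization[OF assms(1) c factor]
      rinv_fexp_unique_solutions[OF assms(1) c]
    by (simp add: c_def[symmetric] chi_step_def)
qed

end
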